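(* Let $d\ge1$, $p\in(0,1)$, $q:=1-p$. Let $f_X$ and $f_Y$ be probability densities on $\mathbb{R}^d$ with the same bounded support, bounded below by $C_L>0$ and above by $C_U<\infty$ on the support, and H\"older continuous with parameter $\gamma\in(0,1]$. Let $X=\{X_1,\dots,X_N\}$ be i.i.d. with density $f_X$ and $Y=\{Y_1,\dots,Y_M\}$ be i.i.d. with density $f_Y$ (independent of $X$), where $M=\lfloor Nq/p\rfloor$. Let $\widehat{D_p}(X,Y)=1-|\mathcal{E}(X,Y)|\frac{N+M}{2NM}$, where $|\mathcal{E}(X,Y)|$ is the number of points $Z_i$ of $Z=X\cup Y$ whose $k$-th nearest neighbor in $Z$ belongs to the other sample. Then $$\mathrm{Var}\big[\widehat{D_p}(X,Y)\big]\le O\!\left(\frac1N\right).$$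
   Context: $\widehat{D_p}$ is the $k$-nearest-neighbor (Friedman–Rafsky type) estimator of the Henze–Penrose divergence $D_p=1-\int \frac{f_X f_Y}{pf_X+qf_Y}\,dx$: in the $k$-NN graph on $Z$ each point is joined to its $k$-th nearest neighbor, and $\mathcal{E}(X,Y)$ is the set of edges joining a point of $X$ to a point of $Y$. Variance is $\mathbb{E}[\hat T^2]-\mathbb{E}[\hat T]^2$. *)

theory Defs
  imports "HOL-Probability.Probability" "HOL-Library.Landau_Symbols"
begin

definition closer :: "(nat \<Rightarrow> 'a::metric_space) \<Rightarrow> nat \<Rightarrow> nat \<Rightarrow> nat \<Rightarrow> bool" where
  "closer z i l j \<longleftrightarrow> dist (z i) (z l) < dist (z i) (z j)
      \<or> (dist (z i) (z l) = dist (z i) (z j) \<and> l < j)"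

definition is_kth_nn :: "(nat \<Rightarrow> 'a::metric_space) \<Rightarrow> nat \<Rightarrow> nat \<Rightarrow> nat \<Rightarrow> nat \<Rightarrow> bool" where
  "is_kth_nn z n k i j \<longleftrightarrow> j < n \<and> j \<noteq> i \<and>
      card {l. l < n \<and> l \<noteq> i \<and> closer z i l j} = k - 1"

definition pooled :: "nat \<Rightarrow> (nat \<Rightarrow> 'a) \<Rightarrow> (nat \<Rightarrow> 'a) \<Rightarrow> nat \<Rightarrow> 'a" where
  "pooled N xs ys = (\<lambda>i. if i < N then xs i else ys (i - N))"

definition cross_count :: "nat \<Rightarrow> nat \<Rightarrow> nat \<Rightarrow> (nat \<Rightarrow> 'a::metric_space) \<Rightarrow> (nat \<Rightarrow> 'a) \<Rightarrow> nat" where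
  "cross_count k N M xs ys =
     card {i. i < N + M \<and> (\<exists>j. is_kth_nn (pooled N xs ys) (N + M) k i j \<and> ((i < N) \<noteq> (j < N)))}"

definition Dp_hat :: "nat \<Rightarrow> nat \<Rightarrow> nat \<Rightarrow> (nat \<Rightarrow> 'a::metric_space) \<Rightarrow> (nat \<Rightarrow> 'a) \<Rightarrow> real" where
  "Dp_hat k N M xs ys = 1 - real (cross_count k N M xs ys) * real (N + M) / (2 * real N * real M)"

definition sample_measure ::
  "nat \<Rightarrow> nat \<Rightarrow> ('a::euclidean_space \<Rightarrow> real) \<Rightarrow> ('a \<Rightarrow> real) \<Rightarrow> ((nat \<Rightarrow> 'a) \<times> (nat \<Rightarrow> 'a)) measure" where
  "sample_measure N M fX fY =
     (PiM {..<N} (\<lambda>_. density lborel (\<lambda>x. ennreal (fX x))))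
       \<Otimes>\<^sub>M (PiM {..<M} (\<lambda>_. density lborel (\<lambda>x. ennreal (fY x))))"

definition variance_under :: "'b measure \<Rightarrow> ('b \<Rightarrow> real) \<Rightarrow> real" where
  "variance_under P T = (\<integral>\<omega>. (T \<omega>)\<^sup>2 \<partial>P) - (\<integral>\<omega>. T \<omega> \<partial>P)\<^sup>2"

definition prob_density :: "('a::euclidean_space \<Rightarrow> real) \<Rightarrow> bool" where
  "prob_density f \<longleftrightarrow> f \<in> borel_measurable lborel \<and> (\<forall>x. 0 \<le> f x)
      \<and> (\<integral>\<^sup>+ x. ennreal (f x) \<partial>lborel) = 1"

end

theory Submission
  imports Defs
begin

text \<open>
  By the Efron-Stein inequality, the variance of a function of independent coordinates is at most
  the sum over the coordinates of the squared maximal change caused by resampling one of them.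
  Resampling one point of the pooled sample (almost surely all points are distinct) changes the
  cross count only at that point and at the points having it among their k nearest neighbours
  before or after the change. Points seen from a common centre within one cone of angular radius
  below 60 degrees are closer to the farthest of them than the centre is, so a point is among the
  k nearest neighbours of at most k times as many points as there are cones in such a cover of
  the sphere. Hence each resampling changes the estimator by O(k (N + M) / (N M)) = O(1/N), and
  summing N + M = O(N) such squares gives O(1/N).
\<close>

lemma integrable_bounded_prob:
  fixes f :: "'a \<Rightarrow> real"
  assumes "prob_space M" "f \<in> borel_measurable M" "\<And>x. x \<in> space M \<Longrightarrow> \<bar>f x\<bar> \<le> B"
  shows "integrable M f"
proof -
  interpret prob_space M by fact
  show ?thesis
    by (rule integrable_const_bound[where B=B]) (use assms in auto)
qed

lemma abs_integral_le_const_prob: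
  fixes f :: "'a \<Rightarrow> real"
  assumes "prob_space M" "integrable M f" "AE x in M. \<bar>f x\<bar> \<le> B"
  shows "\<bar>integral\<^sup>L M f\<bar> \<le> B"
proof -
  interpret prob_space M by fact
  have "\<bar>integral\<^sup>L M f\<bar> \<le> (\<integral>x. \<bar>f x\<bar> \<partial>M)" by (rule integral_abs_bound)
  also have "\<dots> \<le> B" by (rule integral_le_const) (use assms in auto)
  finally show ?thesis .
qed

lemma abs_integral_diff_le_prob:
  fixes f g :: "'a \<Rightarrow> real"
  assumes "prob_space M" "integrable M f" "integrable M g" "AE x in M. \<bar>f x - g x\<bar> \<le> c"
  shows "\<bar>integral\<^sup>L M f - integral\<^sup>L M g\<bar> \<le> c"
  using abs_integral_le_const_prob[of M "\<lambda>x. f x - g x" c] assms by simp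

lemma abs_le_imp_sq_le: "\<bar>x\<bar> \<le> B \<Longrightarrow> \<bar>x\<^sup>2\<bar> \<le> (B::real)\<^sup>2"
  by (simp add: abs_le_square_iff[symmetric])

lemma variance_under_eq_mean_sq_dev:
  fixes f :: "'a \<Rightarrow> real"
  assumes P: "prob_space M" and f: "f \<in> borel_measurable M"
    and bnd: "\<And>x. x \<in> space M \<Longrightarrow> \<bar>f x\<bar> \<le> B"
  shows "variance_under M f = (\<integral>x. (f x - a)\<^sup>2 \<partial>M) - (integral\<^sup>L M f - a)\<^sup>2"
proof -
  interpret prob_space M by fact
  have "integrable M f" by (rule integrable_bounded_prob[OF P f bnd])
  moreover have "integrable M (\<lambda>x. (f x)\<^sup>2)"
    by (rule integrable_bounded_prob[OF P _ abs_le_imp_sq_le[OF bnd]]) (use f in measurable)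
  ultimately show ?thesis
    unfolding variance_under_def power2_diff by (simp add: prob_space)
qed

lemma variance_under_le_mean_sq_dev:
  fixes f :: "'a \<Rightarrow> real"
  assumes "prob_space M" "f \<in> borel_measurable M" "\<And>x. x \<in> space M \<Longrightarrow> \<bar>f x\<bar> \<le> B"
  shows "variance_under M f \<le> (\<integral>x. (f x - a)\<^sup>2 \<partial>M)"
  using variance_under_eq_mean_sq_dev[OF assms, of a] by simp

lemma variance_under_nonneg:
  fixes f :: "'a \<Rightarrow> real"
  assumes "prob_space M" "f \<in> borel_measurable M" "\<And>x. x \<in> space M \<Longrightarrow> \<bar>f x\<bar> \<le> B"
  shows "0 \<le> variance_under M f"
  using variance_under_eq_mean_sq_dev[OF assms, of "integral\<^sup>L M f"] by simp

lemma variance_under_le_sq_of_AE_close: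
  fixes f :: "'a \<Rightarrow> real"
  assumes P: "prob_space M" and f: "f \<in> borel_measurable M"
    and bnd: "\<And>x. x \<in> space M \<Longrightarrow> \<bar>f x\<bar> \<le> B" and close: "AE x in M. \<bar>f x - a\<bar> \<le> c"
  shows "variance_under M f \<le> c\<^sup>2"
proof -
  interpret prob_space M by fact
  have "\<bar>f x - a\<bar> \<le> B + \<bar>a\<bar>" if "x \<in> space M" for x
    using bnd[OF that] by linarith
  then have "integrable M (\<lambda>x. (f x - a)\<^sup>2)"
    by (intro integrable_bounded_prob[OF P _ abs_le_imp_sq_le]) (use f in measurable)
  moreover have "AE x in M. (f x - a)\<^sup>2 \<le> c\<^sup>2"
    using close by eventually_elim (simp add: abs_le_square_iff[symmetric])
  ultimately have "(\<integral>x. (f x - a)\<^sup>2 \<partial>M) \<le> c\<^sup>2" by (rule integral_le_const)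
  then show ?thesis using variance_under_le_mean_sq_dev[OF P f bnd, of a] by linarith
qed

lemma variance_under_le_conditional:
  fixes f :: "'w \<Rightarrow> real" and F :: "'x \<Rightarrow> 'y \<Rightarrow> real"
  assumes Q: "prob_space Q" and N: "prob_space N"
    and F[measurable]: "(\<lambda>(x, y). F x y) \<in> borel_measurable (Q \<Otimes>\<^sub>M N)"
    and bnd: "\<And>x y. x \<in> space Q \<Longrightarrow> y \<in> space N \<Longrightarrow> \<bar>F x y\<bar> \<le> B"
    and mean: "integral\<^sup>L P f = (\<integral>x. (\<integral>y. F x y \<partial>N) \<partial>Q)"
    and mean_sq: "(\<integral>w. (f w)\<^sup>2 \<partial>P) = (\<integral>x. (\<integral>y. (F x y)\<^sup>2 \<partial>N) \<partial>Q)"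
    and cond: "AE x in Q. variance_under N (F x) \<le> a"
  shows "variance_under P f \<le> a + variance_under Q (\<lambda>x. \<integral>y. F x y \<partial>N)"
proof -
  interpret Q: prob_space Q by fact
  interpret N: prob_space N by fact
  define g where "g x = (\<integral>y. F x y \<partial>N)" for x
  define h where "h x = (\<integral>y. (F x y)\<^sup>2 \<partial>N)" for x
  have Fx: "F x \<in> borel_measurable N" if "x \<in> space Q" for x
    using that by measurable
  have g[measurable]: "g \<in> borel_measurable Q" and "h \<in> borel_measurable Q"
    unfolding g_def h_def by measurable
  have "\<bar>g x\<bar> \<le> B" if "x \<in> space Q" for x
    unfolding g_def using bnd[OF that]
    by (intro abs_integral_le_const_prob[OF N integrable_bounded_prob[OF N Fx[OF that]]]) auto
  then have "integrable Q (\<lambda>x. (g x)\<^sup>2)"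
    by (intro integrable_bounded_prob[OF Q _ abs_le_imp_sq_le]) measurable
  moreover have "integrable Q h"
  proof (rule integrable_bounded_prob[OF Q \<open>h \<in> borel_measurable Q\<close>])
    fix x assume x: "x \<in> space Q"
    have "integrable N (\<lambda>y. (F x y)\<^sup>2)"
      by (rule integrable_bounded_prob[OF N _ abs_le_imp_sq_le[OF bnd[OF x]]]) (use x in measurable)
    then show "\<bar>h x\<bar> \<le> B\<^sup>2"
      unfolding h_def using abs_le_imp_sq_le[OF bnd[OF x]]
      by (intro abs_integral_le_const_prob[OF N]) auto
  qed
  ultimately have "variance_under P f = (\<integral>x. h x - (g x)\<^sup>2 \<partial>Q) + variance_under Q g"
    unfolding variance_under_def mean mean_sq g_def[symmetric] h_def[symmetric] by simp
  moreover have "(\<integral>x. h x - (g x)\<^sup>2 \<partial>Q) \<le> a"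
  proof (rule Q.integral_le_const)
    show "integrable Q (\<lambda>x. h x - (g x)\<^sup>2)"
      using \<open>integrable Q h\<close> \<open>integrable Q (\<lambda>x. (g x)\<^sup>2)\<close> by (rule Bochner_Integration.integrable_diff)
    show "AE x in Q. h x - (g x)\<^sup>2 \<le> a"
      using cond by (simp add: variance_under_def g_def h_def)
  qed
  ultimately show ?thesis unfolding g_def[symmetric] by linarith
qed

lemma AE_PiM_insert_iff:
  fixes M :: "'i \<Rightarrow> 'b measure"
  assumes MP: "\<And>i. prob_space (M i)" and fin: "finite J" and iJ: "i \<notin> J"
    and Q: "{\<omega> \<in> space (PiM (insert i J) M). Q \<omega>} \<in> sets (PiM (insert i J) M)"
  shows "(AE \<omega> in PiM (insert i J) M. Q \<omega>) \<longleftrightarrow> (AE x in PiM J M. AE y in M i. Q (x(i:=y)))"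
proof -
  interpret product_prob_space M UNIV by (rule product_prob_spaceI) (rule MP)
  define A where "A = {\<omega> \<in> space (PiM (insert i J) M). \<not> Q \<omega>}"
  have A[measurable]: "A \<in> sets (PiM (insert i J) M)" unfolding A_def using Q by auto
  have "(AE \<omega> in PiM (insert i J) M. Q \<omega>) \<longleftrightarrow> emeasure (PiM (insert i J) M) A = 0"
    unfolding A_def by (rule AE_iff_measurable[OF _ refl]) (use A A_def in auto)
  also have "emeasure (PiM (insert i J) M) A = (\<integral>\<^sup>+ \<omega>. indicator A \<omega> \<partial>PiM (insert i J) M)"
    by simp
  also have "\<dots> = (\<integral>\<^sup>+ x. (\<integral>\<^sup>+ y. indicator A (x(i := y)) \<partial>(M i)) \<partial>(PiM J M))"
    by (rule product_nn_integral_insert) (use fin iJ in auto)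
  also have "\<dots> = 0 \<longleftrightarrow> (AE x in PiM J M. (\<integral>\<^sup>+ y. indicator A (x(i := y)) \<partial>(M i)) = 0)"
    by (rule nn_integral_0_iff_AE) measurable
  also have "\<dots> \<longleftrightarrow> (AE x in PiM J M. AE y in M i. Q (x(i:=y)))"
  proof (rule AE_cong)
    fix x assume x: "x \<in> space (PiM J M)"
    have m: "(\<lambda>y. indicator A (x(i := y)) :: ennreal) \<in> borel_measurable (M i)"
      using measurable_comp[OF measurable_component_update[OF x iJ] borel_measurable_indicator[OF A]]
      by (simp add: comp_def)
    have "(\<integral>\<^sup>+ y. indicator A (x(i := y)) \<partial>(M i)) = 0 \<longleftrightarrow> (AE y in M i. indicator A (x(i := y)) = (0::ennreal))"
      by (rule nn_integral_0_iff_AE[OF m])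
    also have "\<dots> \<longleftrightarrow> (AE y in M i. Q (x(i:=y)))"
    proof (rule AE_cong)
      fix y assume y: "y \<in> space (M i)"
      have "x(i:=y) \<in> space (PiM (insert i J) M)"
        using x y by (auto simp: space_PiM PiE_iff extensional_def)
      then show "(indicator A (x(i := y)) = (0::ennreal)) = Q (x(i := y))"
        by (auto simp: A_def indicator_def)
    qed
    finally show "((\<integral>\<^sup>+ y. indicator A (x(i := y)) \<partial>(M i)) = 0) = (AE y in M i. Q (x(i := y)))" .
  qed
  finally show ?thesis .
qed

lemma AE_variance_section_le:
  fixes M :: "'i \<Rightarrow> 'b measure" and f :: "('i \<Rightarrow> 'b) \<Rightarrow> real"
  assumes MP: "\<And>i. prob_space (M i)" and J: "finite J" "i \<notin> J"
    and f[measurable]: "f \<in> borel_measurable (PiM (insert i J) M)"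
    and bnd: "\<And>w. w \<in> space (PiM (insert i J) M) \<Longrightarrow> \<bar>f w\<bar> \<le> B"
    and H: "AE y in M i. AE w in PiM (insert i J) M. \<bar>f w - f (w(i:=y))\<bar> \<le> c"
  shows "AE x in PiM J M. variance_under (M i) (\<lambda>y. f (x(i:=y))) \<le> c\<^sup>2"
proof -
  let ?P = "PiM (insert i J) M"
  obtain y0 where y0: "y0 \<in> space (M i)" and close: "AE w in ?P. \<bar>f w - f (w(i:=y0))\<bar> \<le> c"
  proof -
    have "\<exists>y\<in>space (M i). AE w in ?P. \<bar>f w - f (w(i:=y))\<bar> \<le> c"
    proof (rule ccontr)
      assume "\<not> ?thesis"
      then have "AE y in M i. \<not> (AE w in ?P. \<bar>f w - f (w(i:=y))\<bar> \<le> c)" by (intro AE_I2) auto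
      with H show False by (rule prob_space.AE_contr[OF MP])
    qed
    then show thesis using that by blast
  qed
  have [measurable]: "(\<lambda>w. w(i:=y0)) \<in> measurable ?P ?P"
    by (rule measurable_fun_upd[where J="insert i J"]) (use y0 in auto)
  have "AE x in PiM J M. AE y in M i. \<bar>f (x(i:=y)) - f (x(i:=y0))\<bar> \<le> c"
    using close by (subst (asm) AE_PiM_insert_iff[OF MP J]) (auto simp: cong del: AE_cong)
  then show ?thesis
  proof (rule AE_mp[OF _ AE_I2], intro impI)
    fix x assume "x \<in> space (PiM J M)"
    moreover from this have "x(i:=y) \<in> space ?P" if "y \<in> space (M i)" for y
      using that by (auto simp: space_PiM PiE_iff extensional_def)
    ultimately show "AE y in M i. \<bar>f (x(i:=y)) - f (x(i:=y0))\<bar> \<le> c \<Longrightarrow>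
        variance_under (M i) (\<lambda>y. f (x(i:=y))) \<le> c\<^sup>2"
      using bnd by (intro variance_under_le_sq_of_AE_close[OF MP]) auto
  qed
qed

lemma AE_integral_section_bounded_difference:
  fixes M :: "'i \<Rightarrow> 'b measure" and f :: "('i \<Rightarrow> 'b) \<Rightarrow> real"
  assumes MP: "\<And>i. prob_space (M i)" and J: "finite J" "i \<notin> J" and j: "j \<in> J"
    and f[measurable]: "f \<in> borel_measurable (PiM (insert i J) M)"
    and bnd: "\<And>w. w \<in> space (PiM (insert i J) M) \<Longrightarrow> \<bar>f w\<bar> \<le> B"
    and H: "AE y in M j. AE w in PiM (insert i J) M. \<bar>f w - f (w(j:=y))\<bar> \<le> c"
  shows "AE y in M j. AE x in PiM J M.
    \<bar>(\<integral>z. f (x(i:=z)) \<partial>M i) - (\<integral>z. f (x(j:=y, i:=z)) \<partial>M i)\<bar> \<le> c"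
  using H
proof (rule AE_mp[OF _ AE_I2], intro impI)
  let ?P = "PiM (insert i J) M"
  fix y assume y: "y \<in> space (M j)" and close: "AE w in ?P. \<bar>f w - f (w(j:=y))\<bar> \<le> c"
  have ij: "i \<noteq> j" using j J by auto
  have [measurable]: "(\<lambda>w. w(j:=y)) \<in> measurable ?P ?P"
    by (rule measurable_fun_upd[where J="insert i J"]) (use y j in auto)
  have "AE x in PiM J M. AE z in M i. \<bar>f (x(i:=z)) - f (x(j:=y, i:=z))\<bar> \<le> c"
    using close by (subst (asm) AE_PiM_insert_iff[OF MP J])
      (auto simp: fun_upd_twist[OF ij] cong del: AE_cong)
  then show "AE x in PiM J M.
      \<bar>(\<integral>z. f (x(i:=z)) \<partial>M i) - (\<integral>z. f (x(j:=y, i:=z)) \<partial>M i)\<bar> \<le> c"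
  proof (rule AE_mp[OF _ AE_I2], intro impI)
    fix x assume x: "x \<in> space (PiM J M)"
    have upd: "x'(i:=z) \<in> space ?P" if "x' \<in> space (PiM J M)" "z \<in> space (M i)" for x' z
      using that by (auto simp: space_PiM PiE_iff extensional_def)
    have "x(j:=y) \<in> space (PiM J M)" using x y j by (auto simp: space_PiM PiE_iff extensional_def)
    with x bnd upd show "AE z in M i. \<bar>f (x(i:=z)) - f (x(j:=y, i:=z))\<bar> \<le> c \<Longrightarrow>
        \<bar>(\<integral>z. f (x(i:=z)) \<partial>M i) - (\<integral>z. f (x(j:=y, i:=z)) \<partial>M i)\<bar> \<le> c"
      by (intro abs_integral_diff_le_prob[OF MP] integrable_bounded_prob[OF MP]) auto
  qed
qed

lemma efron_stein_PiM:
  fixes M :: "'i \<Rightarrow> 'b measure" and f :: "('i \<Rightarrow> 'b) \<Rightarrow> real"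
  assumes MP: "\<And>i. prob_space (M i)" and fin: "finite I"
    and f: "f \<in> borel_measurable (PiM I M)"
    and bnd: "\<And>w. w \<in> space (PiM I M) \<Longrightarrow> \<bar>f w\<bar> \<le> B"
    and H: "\<And>i. i \<in> I \<Longrightarrow> AE y in M i. AE w in PiM I M. \<bar>f w - f (w(i:=y))\<bar> \<le> c"
  shows "variance_under (PiM I M) f \<le> real (card I) * c\<^sup>2"
using fin f bnd H proof (induction I arbitrary: f B rule: finite_induct)
  case empty
  show ?case by (simp add: PiM_empty variance_under_def lebesgue_integral_count_space_finite)
next
  case (insert i J)
  interpret product_prob_space M UNIV by (rule product_prob_spaceI) (rule MP)
  let ?P = "PiM (insert i J) M" and ?PJ = "PiM J M"
  have PP: "prob_space ?P" and PJ: "prob_space ?PJ" by (auto intro!: prob_space_PiM MP)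
  note f[measurable] = insert.prems(1)
  have upd_space: "x(i:=y) \<in> space ?P" if "x \<in> space ?PJ" "y \<in> space (M i)" for x y
    using that by (auto simp: space_PiM PiE_iff extensional_def)
  have Fb: "\<bar>f (x(i:=y))\<bar> \<le> B" if "x \<in> space ?PJ" "y \<in> space (M i)" for x y
    using insert.prems(2)[OF upd_space[OF that]] .
  define g where "g x = (\<integral>y. f (x(i:=y)) \<partial>M i)" for x
  have "variance_under ?P f \<le> c\<^sup>2 + variance_under ?PJ g"
    unfolding g_def
  proof (rule variance_under_le_conditional[OF PJ MP _ Fb])
    show "integral\<^sup>L ?P f = (\<integral>x. (\<integral>y. f (x(i:=y)) \<partial>M i) \<partial>?PJ)"
      by (rule product_integral_insert)
        (use insert.hyps in \<open>auto intro!: integrable_bounded_prob[OF PP f insert.prems(2)]\<close>)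
    show "(\<integral>w. (f w)\<^sup>2 \<partial>?P) = (\<integral>x. (\<integral>y. (f (x(i:=y)))\<^sup>2 \<partial>M i) \<partial>?PJ)"
      by (rule product_integral_insert) (use insert.hyps in
          \<open>auto intro!: integrable_bounded_prob[OF PP _ abs_le_imp_sq_le[OF insert.prems(2)]]\<close>)
    show "AE x in ?PJ. variance_under (M i) (\<lambda>y. f (x(i:=y))) \<le> c\<^sup>2"
      using insert by (intro AE_variance_section_le[OF MP]) auto
  qed measurable
  also have "variance_under ?PJ g \<le> real (card J) * c\<^sup>2"
  proof (rule insert.IH)
    show "g \<in> borel_measurable ?PJ" unfolding g_def by measurable
    show "\<bar>g x\<bar> \<le> B" if "x \<in> space ?PJ" for x
      unfolding g_def using Fb[OF that] that
      by (intro abs_integral_le_const_prob[OF MP] integrable_bounded_prob[OF MP]) auto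
    show "AE y in M j. AE x in ?PJ. \<bar>g x - g (x(j:=y))\<bar> \<le> c" if "j \<in> J" for j
      unfolding g_def using insert that
      by (intro AE_integral_section_bounded_difference[OF MP]) auto
  qed
  finally show ?case using insert.hyps by (simp add: algebra_simps)
qed

lemma efron_stein_pair_PiM:
  fixes MA :: "'i \<Rightarrow> 'b measure" and MB :: "'j \<Rightarrow> 'c measure"
    and f :: "('i \<Rightarrow> 'b) \<times> ('j \<Rightarrow> 'c) \<Rightarrow> real"
  assumes MA: "\<And>i. prob_space (MA i)" and MB: "\<And>j. prob_space (MB j)"
    and I: "finite I" and J: "finite J"
    and f[measurable]: "f \<in> borel_measurable (PiM I MA \<Otimes>\<^sub>M PiM J MB)"
    and bnd: "\<And>w. w \<in> space (PiM I MA \<Otimes>\<^sub>M PiM J MB) \<Longrightarrow> \<bar>f w\<bar> \<le> B"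
    and HA: "\<And>a. a \<in> I \<Longrightarrow>
      AE u in MA a. AE x in PiM I MA. AE y in PiM J MB. \<bar>f (x, y) - f (x(a:=u), y)\<bar> \<le> c"
    and HB: "\<And>b x. b \<in> J \<Longrightarrow> x \<in> space (PiM I MA) \<Longrightarrow>
      AE u in MB b. AE y in PiM J MB. \<bar>f (x, y) - f (x, y(b:=u))\<bar> \<le> c"
  shows "variance_under (PiM I MA \<Otimes>\<^sub>M PiM J MB) f \<le> (real (card I) + real (card J)) * c\<^sup>2"
proof -
  let ?A = "PiM I MA" and ?B = "PiM J MB"
  have PA: "prob_space ?A" and PB: "prob_space ?B" by (auto intro!: prob_space_PiM MA MB)
  interpret A: prob_space ?A by (rule PA)
  interpret B: prob_space ?B by (rule PB)
  interpret AB: pair_prob_space ?A ?B ..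
  have PAB: "prob_space (?A \<Otimes>\<^sub>M ?B)" by (rule AB.prob_space_axioms)
  have F: "(\<lambda>(x, y). f (x, y)) \<in> borel_measurable (?A \<Otimes>\<^sub>M ?B)" by simp
  have fx: "(\<lambda>y. f (x, y)) \<in> borel_measurable ?B" if "x \<in> space ?A" for x
    using that by measurable
  have fb: "\<bar>f (x, y)\<bar> \<le> B" if "x \<in> space ?A" "y \<in> space ?B" for x y
    using bnd that by (simp add: space_pair_measure)
  define g where "g x = (\<integral>y. f (x, y) \<partial>?B)" for x
  have "variance_under (?A \<Otimes>\<^sub>M ?B) f \<le> real (card J) * c\<^sup>2 + variance_under ?A g"
    unfolding g_def
  proof (rule variance_under_le_conditional[OF PA PB F fb])
    show "integral\<^sup>L (?A \<Otimes>\<^sub>M ?B) f = (\<integral>x. (\<integral>y. f (x, y) \<partial>?B) \<partial>?A)"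
      by (rule AB.integral_fst'[symmetric]) (rule integrable_bounded_prob[OF PAB f bnd])
    show "(\<integral>w. (f w)\<^sup>2 \<partial>(?A \<Otimes>\<^sub>M ?B)) = (\<integral>x. (\<integral>y. (f (x, y))\<^sup>2 \<partial>?B) \<partial>?A)"
      by (rule AB.integral_fst'[symmetric, where f="\<lambda>w. (f w)\<^sup>2", simplified])
        (rule integrable_bounded_prob[OF PAB _ abs_le_imp_sq_le[OF bnd]], measurable)
    show "AE x in ?A. variance_under ?B (\<lambda>y. f (x, y)) \<le> real (card J) * c\<^sup>2"
      by (intro AE_I2 efron_stein_PiM[OF MB J fx fb HB])
  qed
  also have "variance_under ?A g \<le> real (card I) * c\<^sup>2"
  proof (rule efron_stein_PiM[OF MA I])
    show "g \<in> borel_measurable ?A" unfolding g_def by measurable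
    show "\<bar>g x\<bar> \<le> B" if "x \<in> space ?A" for x
      unfolding g_def using fb[OF that]
      by (intro abs_integral_le_const_prob[OF PB integrable_bounded_prob[OF PB fx[OF that]]]) auto
    have g_diff: "\<bar>g x - g x'\<bar> \<le> c" if "x \<in> space ?A" "x' \<in> space ?A"
      and "AE y in ?B. \<bar>f (x, y) - f (x', y)\<bar> \<le> c" for x x'
      unfolding g_def using that
      by (intro abs_integral_diff_le_prob[OF PB] integrable_bounded_prob[OF PB fx fb]) auto
    show "AE u in MA a. AE x in ?A. \<bar>g x - g (x(a:=u))\<bar> \<le> c" if a: "a \<in> I" for a
      using HA[OF a] by (rule AE_mp[OF _ AE_I2])
        (auto elim!: AE_mp[OF _ AE_I2] intro!: g_diff simp: a space_PiM PiE_iff extensional_def)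
  qed
  finally show ?thesis by (simp add: algebra_simps)
qed

definition sphere_half_net :: "'a::real_normed_vector set \<Rightarrow> bool" where
  "sphere_half_net U \<longleftrightarrow> finite U \<and> (\<forall>v. norm v = 1 \<longrightarrow> (\<exists>u\<in>U. dist v u < 1/2))"

lemma sphere_half_net_exists: "\<exists>U::'a::euclidean_space set. sphere_half_net U"
proof -
  have "compact (sphere (0::'a) 1)" by simp
  then obtain U where "finite U" "sphere (0::'a) 1 \<subseteq> (\<Union>x\<in>U. ball x (1/2))"
    unfolding compact_eq_totally_bounded by (meson half_gt_zero zero_less_one)
  then show ?thesis
    unfolding sphere_half_net_def by (intro exI[of _ U]) (fastforce simp: dist_commute)
qed

lemma norm_diff_lt_of_close_directions:
  fixes a b u :: "'a::real_inner"
  assumes a0: "a \<noteq> 0" and b0: "b \<noteq> 0" and ab: "norm a \<le> norm b"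
    and au: "dist (a /\<^sub>R norm a) u < 1/2" and bu: "dist (b /\<^sub>R norm b) u < 1/2"
  shows "norm (a - b) < norm b"
proof -
  define ua where "ua = a /\<^sub>R norm a"
  define ub where "ub = b /\<^sub>R norm b"
  have uu: "ua \<bullet> ua = 1" "ub \<bullet> ub = 1"
    using a0 b0 by (simp_all add: ua_def ub_def flip: power2_norm_eq_inner)
  have "dist ua ub < 1"
    using au bu dist_triangle_half_l[of ua u 1 ub] by (simp add: ua_def ub_def dist_commute)
  then have "(norm (ua - ub))\<^sup>2 < 1"
    by (simp add: dist_norm power_less_one_iff)
  moreover have "(norm (ua - ub))\<^sup>2 = 2 - 2 * (ua \<bullet> ub)"
    using uu by (simp add: power2_norm_eq_inner algebra_simps inner_commute)
  ultimately have "ua \<bullet> ub > 1/2" by simp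
  moreover have "a \<bullet> b = norm a * norm b * (ua \<bullet> ub)"
    using a0 b0 by (simp add: ua_def ub_def field_simps)
  ultimately have "a \<bullet> b > norm a * norm b / 2"
    using a0 b0 by (simp add: field_simps)
  then have "(norm (a - b))\<^sup>2 < (norm a)\<^sup>2 - norm a * norm b + (norm b)\<^sup>2"
    by (simp add: power2_norm_eq_inner algebra_simps inner_commute)
  also have "\<dots> \<le> (norm b)\<^sup>2" using ab by (simp add: power2_eq_square mult_left_mono)
  finally show ?thesis by (simp add: power_less_imp_less_base)
qed

definition nn_rank :: "(nat \<Rightarrow> 'a::metric_space) \<Rightarrow> nat \<Rightarrow> nat \<Rightarrow> nat \<Rightarrow> nat" where
  "nn_rank z n i j = card {l. l < n \<and> l \<noteq> i \<and> closer z i l j}"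

lemma is_kth_nn_iff_nn_rank: "is_kth_nn z n k i j \<longleftrightarrow> j < n \<and> j \<noteq> i \<and> nn_rank z n i j = k - 1"
  by (simp add: is_kth_nn_def nn_rank_def)

lemma nn_rank_less_of_closer:
  assumes "closer z i m j" "m < n" "m \<noteq> i"
  shows "nn_rank z n i m < nn_rank z n i j"
  unfolding nn_rank_def
proof (rule psubset_card_mono)
  show "{l. l < n \<and> l \<noteq> i \<and> closer z i l m} \<subset> {l. l < n \<and> l \<noteq> i \<and> closer z i l j}"
    using assms by (auto simp: closer_def)
qed simp

lemma card_nn_rank_less_in_cone_le:
  fixes z :: "nat \<Rightarrow> 'a::real_inner"
  assumes "finite S"
    and S: "\<And>i. i \<in> S \<Longrightarrow> i < n \<and> i \<noteq> m \<and> z i \<noteq> z m \<and> nn_rank z n i m < k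
      \<and> dist ((z i - z m) /\<^sub>R norm (z i - z m)) u < 1/2"
  shows "card S \<le> k"
proof (cases "S = {}")
  case False
  let ?r = "\<lambda>l. norm (z l - z m)"
  obtain i where i: "i \<in> S" and i_max: "\<And>l. l \<in> S \<Longrightarrow> ?r l \<le> ?r i"
  proof -
    have "Max (?r ` S) \<in> ?r ` S" using \<open>finite S\<close> False by (intro Max_in) auto
    then obtain i where i: "i \<in> S" and max: "Max (?r ` S) = ?r i" by (rule imageE)
    show thesis
    proof (rule that[OF i])
      fix l assume "l \<in> S"
      then show "?r l \<le> ?r i" unfolding max[symmetric] using \<open>finite S\<close> by (intro Max_ge) auto
    qed
  qed
  \<comment> \<open>Seen from z m, all points of S lie in one narrow cone, so the farthest of them, z i,
    is closer to every other point of S than to z m.\<close>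
  have "S - {i} \<subseteq> {l. l < n \<and> l \<noteq> i \<and> closer z i l m}"
  proof
    fix l assume l: "l \<in> S - {i}"
    have "z l - z m \<noteq> 0" "z i - z m \<noteq> 0"
      "dist ((z l - z m) /\<^sub>R norm (z l - z m)) u < 1/2"
      "dist ((z i - z m) /\<^sub>R norm (z i - z m)) u < 1/2"
      using S[of l] S[OF i] l by auto
    then have "norm ((z l - z m) - (z i - z m)) < norm (z i - z m)"
      using i_max[of l] l by (intro norm_diff_lt_of_close_directions) auto
    then show "l \<in> {l. l < n \<and> l \<noteq> i \<and> closer z i l m}"
      using S[of l] l by (auto simp: closer_def dist_norm norm_minus_commute)
  qed
  then have "card (S - {i}) \<le> nn_rank z n i m"
    unfolding nn_rank_def by (rule card_mono[rotated]) simp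
  moreover have "nn_rank z n i m < k" using S[OF i] by blast
  ultimately show ?thesis using i \<open>finite S\<close> by simp
qed simp

lemma card_nn_rank_less_le:
  fixes z :: "nat \<Rightarrow> 'a::real_inner" and U :: "'a set"
  assumes U: "sphere_half_net U" and distinct: "\<And>l. l < n \<Longrightarrow> l \<noteq> m \<Longrightarrow> z l \<noteq> z m"
  shows "card {i. i < n \<and> i \<noteq> m \<and> nn_rank z n i m < k} \<le> k * card U"
proof -
  define T where "T = {i. i < n \<and> i \<noteq> m \<and> nn_rank z n i m < k}"
  define dir where "dir i = (z i - z m) /\<^sub>R norm (z i - z m)" for i
  have "\<exists>u\<in>U. dist (dir i) u < 1/2" if "i \<in> T" for i
    using U distinct[of i] that by (auto simp: sphere_half_net_def T_def dir_def)
  then obtain cone where cone: "\<And>i. i \<in> T \<Longrightarrow> cone i \<in> U \<and> dist (dir i) (cone i) < 1/2"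
    by metis
  have "finite U" using U by (simp add: sphere_half_net_def)
  have "T \<subseteq> (\<Union>u\<in>U. {i\<in>T. cone i = u})" using cone by blast
  then have "card T \<le> card (\<Union>u\<in>U. {i\<in>T. cone i = u})"
    by (rule card_mono[rotated]) (simp add: \<open>finite U\<close> T_def)
  also have "\<dots> \<le> (\<Sum>u\<in>U. card {i\<in>T. cone i = u})" by (rule card_UN_le[OF \<open>finite U\<close>])
  also have "\<dots> \<le> (\<Sum>u\<in>U. k)"
  proof (intro sum_mono card_nn_rank_less_in_cone_le)
    fix u i assume "i \<in> {i\<in>T. cone i = u}"
    then show "i < n \<and> i \<noteq> m \<and> z i \<noteq> z m \<and> nn_rank z n i m < k
      \<and> dist ((z i - z m) /\<^sub>R norm (z i - z m)) u < 1/2"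
      using cone[of i] distinct[of i] by (auto simp: T_def dir_def)
  qed (simp add: T_def)
  finally show ?thesis by (simp add: T_def mult.commute)
qed

lemma is_kth_nn_update:
  assumes k: "1 \<le> k" and im: "i \<noteq> m" and agree: "\<And>l. l \<noteq> m \<Longrightarrow> z' l = z l"
    and far: "k \<le> nn_rank z n i m" and far': "k \<le> nn_rank z' n i m"
    and kth: "is_kth_nn z n k i j"
  shows "is_kth_nn z' n k i j"
proof -
  define S where "S zz = {l. l < n \<and> l \<noteq> i \<and> closer zz i l j}" for zz :: "nat \<Rightarrow> 'a"
  have j: "j < n" "j \<noteq> i" and rank: "nn_rank z n i j = k - 1"
    using kth by (auto simp: is_kth_nn_iff_nn_rank)
  have "j \<noteq> m" using far rank k by auto
  then have same: "S z' - {m} = S z - {m}"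
    using agree im by (auto simp: S_def closer_def)
  have "m \<notin> S z"
    using nn_rank_less_of_closer[of z i m j n] far rank by (auto simp: S_def)
  moreover have "m \<notin> S z'"
  proof
    assume m: "m \<in> S z'"
    then have "nn_rank z' n i m < card (S z')"
      using nn_rank_less_of_closer[of z' i m j n] by (auto simp: S_def nn_rank_def)
    also have "S z' = insert m (S z)" using same m by blast
    finally show False using far' rank k \<open>m \<notin> S z\<close> by (simp add: nn_rank_def S_def)
  qed
  ultimately have "S z' = S z" using same by blast
  then show ?thesis using j rank by (simp add: is_kth_nn_iff_nn_rank nn_rank_def S_def)
qed

definition cross_nn_count :: "(nat \<Rightarrow> 'a::metric_space) \<Rightarrow> nat \<Rightarrow> nat \<Rightarrow> nat \<Rightarrow> nat" where
  "cross_nn_count z n N k = card {i. i < n \<and> (\<exists>j. is_kth_nn z n k i j \<and> ((i < N) \<noteq> (j < N)))}"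

lemma cross_count_eq_cross_nn_count:
  "cross_count k N M xs ys = cross_nn_count (pooled N xs ys) (N + M) N k"
  by (simp add: cross_count_def cross_nn_count_def)

lemma abs_card_diff_le_card:
  assumes "finite A" "finite B" "finite E" "A - E = B - E"
  shows "\<bar>real (card A) - real (card B)\<bar> \<le> real (card E)"
proof -
  have "card X \<le> card (X - E) + card E" if "finite X" for X :: "'a set"
    using card_Un_le[of "X - E" E] card_mono[of "(X - E) \<union> E" X] that assms(3) by auto
  then have "card A \<le> card B + card E" "card B \<le> card A + card E"
    using assms card_mono[of B "B - E"] card_mono[of A "A - E"] by (metis Diff_subset add_le_mono1 le_trans)+
  then show ?thesis by linarith
qed

lemma cross_nn_count_update:
  fixes z :: "nat \<Rightarrow> 'a::real_inner" and U :: "'a set"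
  assumes U: "sphere_half_net U" and k: "1 \<le> k"
    and distinct: "\<And>l. l < n \<Longrightarrow> l \<noteq> m \<Longrightarrow> z l \<noteq> z m"
    and fresh: "\<And>l. l < n \<Longrightarrow> l \<noteq> m \<Longrightarrow> z l \<noteq> w"
  shows "\<bar>real (cross_nn_count z n N k) - real (cross_nn_count (z(m:=w)) n N k)\<bar>
    \<le> 1 + 2 * real k * real (card U)"
proof -
  define z' where "z' = z(m:=w)"
  define near where "near zz = {i. i < n \<and> i \<noteq> m \<and> nn_rank zz n i m < k}" for zz :: "nat \<Rightarrow> 'a"
  define cross where "cross zz = {i. i < n \<and> (\<exists>j. is_kth_nn zz n k i j \<and> ((i < N) \<noteq> (j < N)))}"
    for zz :: "nat \<Rightarrow> 'a"
  define E where "E = insert m (near z \<union> near z')"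
  have agree: "\<And>l. l \<noteq> m \<Longrightarrow> z' l = z l" by (simp add: z'_def)
  have "card (near z) \<le> k * card U"
    unfolding near_def by (rule card_nn_rank_less_le[OF U]) (rule distinct)
  moreover have "card (near z') \<le> k * card U"
    unfolding near_def by (rule card_nn_rank_less_le[OF U]) (simp add: z'_def fresh)
  moreover have "card E \<le> Suc (card (near z \<union> near z'))"
    unfolding E_def by (simp add: card_insert_if near_def)
  ultimately have "card E \<le> 1 + 2 * k * card U"
    using card_Un_le[of "near z" "near z'"] by linarith
  moreover have "cross z - E = cross z' - E"
  proof -
    have "is_kth_nn z n k i j \<longleftrightarrow> is_kth_nn z' n k i j" if "i < n" "i \<notin> E" for i j
    proof -
      have "i \<noteq> m" "k \<le> nn_rank z n i m" "k \<le> nn_rank z' n i m"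
        using that by (auto simp: E_def near_def)
      then show ?thesis
        using is_kth_nn_update[where z=z and z'=z', OF k _ agree]
          is_kth_nn_update[where z=z' and z'=z, OF k _ agree[symmetric]] by blast
    qed
    then show ?thesis by (auto simp: cross_def)
  qed
  moreover have "finite (cross zz)" for zz by (simp add: cross_def)
  moreover have "finite E" by (simp add: E_def near_def)
  ultimately have "\<bar>real (card (cross z)) - real (card (cross z'))\<bar> \<le> real (1 + 2 * k * card U)"
    using abs_card_diff_le_card[of "cross z" "cross z'" E] by (meson of_nat_mono order_trans)
  then show ?thesis by (simp add: cross_nn_count_def cross_def z'_def)
qed

definition borel_diffuse_prob :: "'a::topological_space measure \<Rightarrow> bool" where
  "borel_diffuse_prob \<mu> \<longleftrightarrow> prob_space \<mu> \<and> sets \<mu> = sets borel \<and> (\<forall>v. AE u in \<mu>. u \<noteq> v)"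

lemma borel_diffuse_prob_density:
  fixes f :: "'a::euclidean_space \<Rightarrow> real"
  assumes "prob_density f"
  shows "borel_diffuse_prob (density lborel (\<lambda>x. ennreal (f x)))"
proof -
  have f: "(\<lambda>x. ennreal (f x)) \<in> borel_measurable lborel"
    using assms by (simp add: prob_density_def)
  have "prob_space (density lborel (\<lambda>x. ennreal (f x)))"
    using assms by (intro prob_spaceI) (simp add: emeasure_density[OF f] prob_density_def)
  moreover have "AE u in density lborel (\<lambda>x. ennreal (f x)). u \<noteq> v" for v
    unfolding AE_density[OF f] using AE_lborel_singleton[of v] by eventually_elim auto
  ultimately show ?thesis by (simp add: borel_diffuse_prob_def)
qed

lemma sets_neq_borel_measurable:
  fixes f g :: "'b \<Rightarrow> 'a::euclidean_space"
  assumes [measurable]: "f \<in> borel_measurable M" "g \<in> borel_measurable M"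
  shows "{w \<in> space M. f w \<noteq> g w} \<in> sets M"
proof -
  have "{w \<in> space M. f w \<noteq> g w} = {w \<in> space M. 0 < dist (f w) (g w)}" by auto
  also have "\<dots> \<in> sets M" by measurable
  finally show ?thesis .
qed

lemma measurable_component_borel:
  assumes "sets \<mu> = sets borel" "j \<in> J"
  shows "(\<lambda>x. x j) \<in> borel_measurable (PiM J (\<lambda>_. \<mu>))"
proof -
  have "(\<lambda>x. x j) \<in> PiM J (\<lambda>_. \<mu>) \<rightarrow>\<^sub>M \<mu>" by (rule measurable_component_singleton[OF assms(2)])
  then show ?thesis unfolding measurable_cong_sets[OF refl assms(1)] .
qed

lemma AE_PiM_component_neq:
  fixes \<mu> :: "'a::euclidean_space measure"
  assumes \<mu>: "borel_diffuse_prob \<mu>" and I: "finite I" and b: "b \<in> I"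
    and h: "h \<in> borel_measurable (PiM I (\<lambda>_. \<mu>))" and h_indep: "\<And>x y. h (x(b:=y)) = h x"
  shows "AE x in PiM I (\<lambda>_. \<mu>). x b \<noteq> h x"
proof -
  have I_eq: "insert b (I - {b}) = I" using b by auto
  have P: "prob_space \<mu>" and sets: "sets \<mu> = sets borel" and ne: "\<And>v. AE u in \<mu>. u \<noteq> v"
    using \<mu> by (auto simp: borel_diffuse_prob_def)
  have "AE x in PiM (insert b (I - {b})) (\<lambda>_. \<mu>). x b \<noteq> h x"
  proof (subst AE_PiM_insert_iff[OF P])
    show "{x \<in> space (PiM (insert b (I - {b})) (\<lambda>_. \<mu>)). x b \<noteq> h x}
      \<in> sets (PiM (insert b (I - {b})) (\<lambda>_. \<mu>))"
      unfolding I_eq by (rule sets_neq_borel_measurable[OF measurable_component_borel[OF sets b] h])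
    show "AE x in PiM (I - {b}) (\<lambda>_. \<mu>). AE y in \<mu>. (x(b:=y)) b \<noteq> h (x(b:=y))"
      by (rule AE_I2) (simp add: h_indep ne)
  qed (use I in auto)
  then show ?thesis by (simp only: I_eq)
qed

lemma AE_PiM_components_neq:
  fixes \<mu> :: "'a::euclidean_space measure"
  assumes \<mu>: "borel_diffuse_prob \<mu>" and I: "finite I" and "b \<in> I" "b' \<in> I" "b' \<noteq> b"
  shows "AE x in PiM I (\<lambda>_. \<mu>). x b \<noteq> x b'"
  using assms \<mu> by (intro AE_PiM_component_neq measurable_component_borel)
    (auto simp: borel_diffuse_prob_def)

lemma real_card_eq_sum_indicator:
  fixes n :: nat
  shows "real (card {l. l < n \<and> P l}) = (\<Sum>l<n. if P l then 1 else 0)"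
proof -
  have "(\<Sum>l<n. if P l then 1 else 0 :: real) = (\<Sum>l\<in>{l \<in> {..<n}. P l}. 1)"
    by (rule sum.inter_filter[symmetric]) simp
  also have "{l \<in> {..<n}. P l} = {l. l < n \<and> P l}" by auto
  finally show ?thesis by simp
qed

lemma borel_measurable_cross_nn_count:
  fixes Z :: "'w \<Rightarrow> nat \<Rightarrow> 'a::euclidean_space"
  assumes [measurable]: "\<And>i. i < n \<Longrightarrow> (\<lambda>\<omega>. Z \<omega> i) \<in> borel_measurable M"
  shows "(\<lambda>\<omega>. real (cross_nn_count (Z \<omega>) n N k)) \<in> borel_measurable M"
proof -
  have rank: "real (nn_rank (Z \<omega>) n i j) = (\<Sum>l<n. if l \<noteq> i \<and>
      (dist (Z \<omega> i) (Z \<omega> l) < dist (Z \<omega> i) (Z \<omega> j)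
        \<or> dist (Z \<omega> i) (Z \<omega> l) = dist (Z \<omega> i) (Z \<omega> j) \<and> l < j) then 1 else 0)" for \<omega> i j
    unfolding nn_rank_def closer_def by (subst real_card_eq_sum_indicator) simp
  have count: "real (cross_nn_count (Z \<omega>) n N k) = (\<Sum>i<n. if \<exists>j\<in>{..<n}. j \<noteq> i
      \<and> real (nn_rank (Z \<omega>) n i j) = real (k - 1) \<and> (i < N) \<noteq> (j < N) then 1 else 0)" for \<omega>
    unfolding cross_nn_count_def is_kth_nn_iff_nn_rank of_nat_eq_iff
    by (subst real_card_eq_sum_indicator[symmetric]) (metis lessThan_iff)
  show ?thesis unfolding count rank by measurable
qed

lemma pooled_update_fst: "a < N \<Longrightarrow> pooled N (xs(a:=w)) ys = (pooled N xs ys)(a:=w)"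
  by (auto simp: pooled_def fun_eq_iff)

lemma pooled_update_snd: "pooled N xs (ys(b:=w)) = (pooled N xs ys)(N + b:=w)"
  by (auto simp: pooled_def fun_eq_iff)

lemma Dp_hat_eq_cross_nn_count:
  "Dp_hat k N M xs ys =
    1 - real (cross_nn_count (pooled N xs ys) (N + M) N k) * (real (N + M) / (2 * real N * real M))"
  by (simp add: Dp_hat_def cross_count_eq_cross_nn_count)

lemma abs_Dp_hat_le: "\<bar>Dp_hat k N M xs ys\<bar> \<le> 1 + real (N + M) * (real (N + M) / (2 * real N * real M))"
proof -
  define R where "R = real (N + M) / (2 * real N * real M)"
  have "cross_count k N M xs ys \<le> card {..<N + M}"
    unfolding cross_count_def by (rule card_mono) auto
  then have "real (cross_count k N M xs ys) * R \<le> real (N + M) * R"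
    by (intro mult_right_mono) (auto simp: R_def)
  moreover have "0 \<le> real (cross_count k N M xs ys) * R" by (simp add: R_def)
  moreover have "Dp_hat k N M xs ys = 1 - real (cross_count k N M xs ys) * R"
    by (simp add: Dp_hat_def R_def)
  ultimately show ?thesis unfolding R_def by linarith
qed

lemma Dp_hat_update_le:
  fixes xs ys xs' ys' :: "nat \<Rightarrow> 'a::euclidean_space" and U :: "'a set"
  assumes U: "sphere_half_net U" and k: "1 \<le> k"
    and update: "pooled N xs' ys' = (pooled N xs ys)(m:=w)"
    and distinct: "\<And>l. l < N + M \<Longrightarrow> l \<noteq> m \<Longrightarrow> pooled N xs ys l \<noteq> pooled N xs ys m"
    and fresh: "\<And>l. l < N + M \<Longrightarrow> l \<noteq> m \<Longrightarrow> pooled N xs ys l \<noteq> w"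
  shows "\<bar>Dp_hat k N M xs ys - Dp_hat k N M xs' ys'\<bar>
    \<le> (1 + 2 * real k * real (card U)) * (real (N + M) / (2 * real N * real M))"
proof -
  define R where "R = real (N + M) / (2 * real N * real M)"
  define c where "c zz = real (cross_nn_count zz (N + M) N k)" for zz :: "nat \<Rightarrow> 'a"
  have R0: "0 \<le> R" by (simp add: R_def)
  have "Dp_hat k N M xs ys - Dp_hat k N M xs' ys' = (c ((pooled N xs ys)(m:=w)) - c (pooled N xs ys)) * R"
    unfolding Dp_hat_eq_cross_nn_count update R_def[symmetric] c_def by (simp add: algebra_simps)
  then have "\<bar>Dp_hat k N M xs ys - Dp_hat k N M xs' ys'\<bar>
      = \<bar>c (pooled N xs ys) - c ((pooled N xs ys)(m:=w))\<bar> * R"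
    by (simp add: abs_mult abs_minus_commute R_def)
  also have "\<dots> \<le> (1 + 2 * real k * real (card U)) * R"
    unfolding c_def using distinct fresh R0
    by (intro mult_right_mono cross_nn_count_update[OF U k]) auto
  finally show ?thesis unfolding R_def .
qed

lemma AE_PiM_component_neq_const:
  fixes \<mu> :: "'a::euclidean_space measure"
  assumes "borel_diffuse_prob \<mu>" "finite I" "b \<in> I"
  shows "AE x in PiM I (\<lambda>_. \<mu>). x b \<noteq> v"
  using AE_PiM_component_neq[OF assms, of "\<lambda>_. v"] by simp

lemma Dp_hat_bounded_difference_fst:
  fixes \<mu>X \<mu>Y :: "'a::euclidean_space measure" and U :: "'a set"
  assumes \<mu>X: "borel_diffuse_prob \<mu>X" and \<mu>Y: "borel_diffuse_prob \<mu>Y"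
    and U: "sphere_half_net U" and k: "1 \<le> k" and a: "a < N"
  shows "AE w in \<mu>X. AE xs in PiM {..<N} (\<lambda>_. \<mu>X). AE ys in PiM {..<M} (\<lambda>_. \<mu>Y).
    \<bar>Dp_hat k N M xs ys - Dp_hat k N M (xs(a:=w)) ys\<bar>
      \<le> (1 + 2 * real k * real (card U)) * (real (N + M) / (2 * real N * real M))"
proof (rule AE_I2)
  fix w
  have "AE xs in PiM {..<N} (\<lambda>_. \<mu>X). \<forall>a'\<in>{..<N} - {a}. xs a' \<noteq> xs a \<and> xs a' \<noteq> w"
    using a by (intro AE_finite_allI eventually_conj AE_PiM_components_neq[OF \<mu>X]
        AE_PiM_component_neq_const[OF \<mu>X]) auto
  then show "AE xs in PiM {..<N} (\<lambda>_. \<mu>X). AE ys in PiM {..<M} (\<lambda>_. \<mu>Y).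
    \<bar>Dp_hat k N M xs ys - Dp_hat k N M (xs(a:=w)) ys\<bar>
      \<le> (1 + 2 * real k * real (card U)) * (real (N + M) / (2 * real N * real M))"
  proof eventually_elim
    fix xs assume xs: "\<forall>a'\<in>{..<N} - {a}. xs a' \<noteq> xs a \<and> xs a' \<noteq> w"
    have "AE ys in PiM {..<M} (\<lambda>_. \<mu>Y). \<forall>b\<in>{..<M}. ys b \<noteq> xs a \<and> ys b \<noteq> w"
      by (intro AE_finite_allI eventually_conj AE_PiM_component_neq_const[OF \<mu>Y]) auto
    then show "AE ys in PiM {..<M} (\<lambda>_. \<mu>Y). \<bar>Dp_hat k N M xs ys - Dp_hat k N M (xs(a:=w)) ys\<bar>
      \<le> (1 + 2 * real k * real (card U)) * (real (N + M) / (2 * real N * real M))"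
    proof eventually_elim
      fix ys assume ys: "\<forall>b\<in>{..<M}. ys b \<noteq> xs a \<and> ys b \<noteq> w"
      show "\<bar>Dp_hat k N M xs ys - Dp_hat k N M (xs(a:=w)) ys\<bar>
        \<le> (1 + 2 * real k * real (card U)) * (real (N + M) / (2 * real N * real M))"
        by (rule Dp_hat_update_le[OF U k pooled_update_fst[OF a]])
          (use xs ys a in \<open>auto simp: pooled_def\<close>)
    qed
  qed
qed

lemma Dp_hat_bounded_difference_snd:
  fixes \<mu>X \<mu>Y :: "'a::euclidean_space measure" and U :: "'a set"
  assumes \<mu>Y: "borel_diffuse_prob \<mu>Y"
    and U: "sphere_half_net U" and k: "1 \<le> k" and b: "b < M"
  shows "AE w in \<mu>Y. AE ys in PiM {..<M} (\<lambda>_. \<mu>Y).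
    \<bar>Dp_hat k N M xs ys - Dp_hat k N M xs (ys(b:=w))\<bar>
      \<le> (1 + 2 * real k * real (card U)) * (real (N + M) / (2 * real N * real M))"
proof -
  have "AE w in \<mu>Y. \<forall>a\<in>{..<N}. w \<noteq> xs a"
    using \<mu>Y by (intro AE_finite_allI) (auto simp: borel_diffuse_prob_def)
  then show ?thesis
  proof eventually_elim
    fix w assume w: "\<forall>a\<in>{..<N}. w \<noteq> xs a"
    have "AE ys in PiM {..<M} (\<lambda>_. \<mu>Y). (\<forall>b'\<in>{..<M} - {b}. ys b' \<noteq> ys b \<and> ys b' \<noteq> w)
        \<and> (\<forall>a\<in>{..<N}. ys b \<noteq> xs a)"
      using b by (intro eventually_conj AE_finite_allI AE_PiM_components_neq[OF \<mu>Y]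
          AE_PiM_component_neq_const[OF \<mu>Y]) auto
    then show "AE ys in PiM {..<M} (\<lambda>_. \<mu>Y). \<bar>Dp_hat k N M xs ys - Dp_hat k N M xs (ys(b:=w))\<bar>
      \<le> (1 + 2 * real k * real (card U)) * (real (N + M) / (2 * real N * real M))"
    proof eventually_elim
      fix ys assume ys: "(\<forall>b'\<in>{..<M} - {b}. ys b' \<noteq> ys b \<and> ys b' \<noteq> w) \<and> (\<forall>a\<in>{..<N}. ys b \<noteq> xs a)"
      show "\<bar>Dp_hat k N M xs ys - Dp_hat k N M xs (ys(b:=w))\<bar>
        \<le> (1 + 2 * real k * real (card U)) * (real (N + M) / (2 * real N * real M))"
      proof (rule Dp_hat_update_le[OF U k pooled_update_snd])
        fix l assume l: "l < N + M" "l \<noteq> N + b"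
        have "l - N \<in> {..<M} - {b}" if "\<not> l < N" using l that by auto
        then show "pooled N xs ys l \<noteq> pooled N xs ys (N + b)" "pooled N xs ys l \<noteq> w"
          using ys w by (auto simp: pooled_def dest: bspec[of _ _ l])
      qed
    qed
  qed
qed

lemma borel_measurable_Dp_hat:
  fixes \<mu>X \<mu>Y :: "'a::euclidean_space measure"
  assumes "borel_diffuse_prob \<mu>X" "borel_diffuse_prob \<mu>Y"
  shows "(\<lambda>(xs, ys). Dp_hat k N M xs ys)
    \<in> borel_measurable (PiM {..<N} (\<lambda>_. \<mu>X) \<Otimes>\<^sub>M PiM {..<M} (\<lambda>_. \<mu>Y))"
proof -
  have sets: "sets \<mu>X = sets borel" "sets \<mu>Y = sets borel"
    using assms by (simp_all add: borel_diffuse_prob_def)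
  have "(\<lambda>\<omega>. pooled N (fst \<omega>) (snd \<omega>) i)
      \<in> borel_measurable (PiM {..<N} (\<lambda>_. \<mu>X) \<Otimes>\<^sub>M PiM {..<M} (\<lambda>_. \<mu>Y))" if "i < N + M" for i
  proof (cases "i < N")
    case True
    then have "(\<lambda>xs. xs i) \<in> borel_measurable (PiM {..<N} (\<lambda>_. \<mu>X))"
      by (intro measurable_component_borel[OF sets(1)]) simp
    with True show ?thesis
      by (simp add: pooled_def measurable_compose[OF measurable_fst])
  next
    case False
    then have "(\<lambda>ys. ys (i - N)) \<in> borel_measurable (PiM {..<M} (\<lambda>_. \<mu>Y))"
      using that by (intro measurable_component_borel[OF sets(2)]) simp
    with False show ?thesis
      by (simp add: pooled_def measurable_compose[OF measurable_snd])
  qed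
  then have "(\<lambda>\<omega>. real (cross_nn_count (pooled N (fst \<omega>) (snd \<omega>)) (N + M) N k))
      \<in> borel_measurable (PiM {..<N} (\<lambda>_. \<mu>X) \<Otimes>\<^sub>M PiM {..<M} (\<lambda>_. \<mu>Y))"
    by (rule borel_measurable_cross_nn_count)
  then show ?thesis
    unfolding Dp_hat_eq_cross_nn_count case_prod_beta by measurable
qed

lemma variance_Dp_hat_le:
  fixes \<mu>X \<mu>Y :: "'a::euclidean_space measure" and U :: "'a set"
  assumes \<mu>X: "borel_diffuse_prob \<mu>X" and \<mu>Y: "borel_diffuse_prob \<mu>Y"
    and U: "sphere_half_net U" and k: "1 \<le> k"
  shows "variance_under (PiM {..<N} (\<lambda>_. \<mu>X) \<Otimes>\<^sub>M PiM {..<M} (\<lambda>_. \<mu>Y)) (\<lambda>(xs, ys). Dp_hat k N M xs ys)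
    \<le> (real N + real M)
      * ((1 + 2 * real k * real (card U)) * (real (N + M) / (2 * real N * real M)))\<^sup>2"
proof -
  define R where "R = real (N + M) / (2 * real N * real M)"
  have "variance_under (PiM {..<N} (\<lambda>_. \<mu>X) \<Otimes>\<^sub>M PiM {..<M} (\<lambda>_. \<mu>Y)) (\<lambda>(xs, ys). Dp_hat k N M xs ys)
    \<le> (real (card {..<N}) + real (card {..<M})) * ((1 + 2 * real k * real (card U)) * R)\<^sup>2"
  proof (rule efron_stein_pair_PiM[where B="1 + real (N + M) * R"])
    show "prob_space \<mu>X" "prob_space \<mu>Y"
      using \<mu>X \<mu>Y by (simp_all add: borel_diffuse_prob_def)
    show "(\<lambda>(xs, ys). Dp_hat k N M xs ys)
      \<in> borel_measurable (PiM {..<N} (\<lambda>_. \<mu>X) \<Otimes>\<^sub>M PiM {..<M} (\<lambda>_. \<mu>Y))"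
      by (rule borel_measurable_Dp_hat[OF \<mu>X \<mu>Y])
    show "\<bar>(\<lambda>(xs, ys). Dp_hat k N M xs ys) w\<bar> \<le> 1 + real (N + M) * R" for w
      using abs_Dp_hat_le[of k N M "fst w" "snd w"] by (simp add: case_prod_beta R_def)
  qed (use Dp_hat_bounded_difference_fst[OF \<mu>X \<mu>Y U k] Dp_hat_bounded_difference_snd[OF \<mu>Y U k]
      in \<open>simp_all add: R_def\<close>)
  then show ?thesis by (simp add: R_def)
qed

lemma variance_Dp_hat_nonneg:
  fixes \<mu>X \<mu>Y :: "'a::euclidean_space measure"
  assumes \<mu>X: "borel_diffuse_prob \<mu>X" and \<mu>Y: "borel_diffuse_prob \<mu>Y"
  shows "0 \<le> variance_under (PiM {..<N} (\<lambda>_. \<mu>X) \<Otimes>\<^sub>M PiM {..<M} (\<lambda>_. \<mu>Y))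
    (\<lambda>(xs, ys). Dp_hat k N M xs ys)"
proof (rule variance_under_nonneg[OF _ borel_measurable_Dp_hat[OF \<mu>X \<mu>Y]])
  show "prob_space (PiM {..<N} (\<lambda>_. \<mu>X) \<Otimes>\<^sub>M PiM {..<M} (\<lambda>_. \<mu>Y))"
    using \<mu>X \<mu>Y by (intro prob_space_pair prob_space_PiM) (simp_all add: borel_diffuse_prob_def)
  show "\<bar>(\<lambda>(xs, ys). Dp_hat k N M xs ys) w\<bar>
    \<le> 1 + real (N + M) * (real (N + M) / (2 * real N * real M))" for w
    using abs_Dp_hat_le[of k N M "fst w" "snd w"] by (simp add: case_prod_beta)
qed

lemma sample_size_bound:
  fixes K r :: real and N M :: nat
  assumes r: "0 < r" and N: "2 / r \<le> real N" and M: "M = nat \<lfloor>real N * r\<rfloor>"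
  shows "(real N + real M) * (K * (real (N + M) / (2 * real N * real M)))\<^sup>2
    \<le> K\<^sup>2 * (1 + r) ^ 3 / r\<^sup>2 * (1 / real N)"
proof -
  have x: "0 < real N" using N r by (smt (verit) divide_pos_pos)
  have "2 \<le> real N * r" using N r by (simp add: field_simps)
  then have y1: "real N * r / 2 \<le> real M" and y2: "real M \<le> real N * r"
    unfolding M by linarith+
  have y: "0 < real M" using y1 x r by (smt (verit) mult_pos_pos half_gt_zero)
  have "(real N + real M) * (K * (real (N + M) / (2 * real N * real M)))\<^sup>2
      = K\<^sup>2 * ((real N + real M) ^ 3 / (4 * (real N)\<^sup>2 * (real M)\<^sup>2))"
    using x y by (simp add: power2_eq_square power3_eq_cube field_simps)
  also have "\<dots> \<le> K\<^sup>2 * ((real N * (1 + r)) ^ 3 / ((real N)\<^sup>2 * (real N * r)\<^sup>2))"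
  proof (intro mult_left_mono frac_le)
    show "(real N + real M) ^ 3 \<le> (real N * (1 + r)) ^ 3"
      using x y y2 by (intro power_mono) (auto simp: algebra_simps)
    have "(real N * r)\<^sup>2 \<le> (2 * real M)\<^sup>2" using x r y1 by (intro power_mono) auto
    then have "(real N)\<^sup>2 * (real N * r)\<^sup>2 \<le> (real N)\<^sup>2 * (2 * real M)\<^sup>2"
      by (rule mult_left_mono) simp
    then show "(real N)\<^sup>2 * (real N * r)\<^sup>2 \<le> 4 * (real N)\<^sup>2 * (real M)\<^sup>2"
      by (simp add: power_mult_distrib)
  qed (use x r in auto)
  also have "\<dots> = K\<^sup>2 * (1 + r) ^ 3 / r\<^sup>2 * (1 / real N)"
    using x r by (simp add: power2_eq_square power3_eq_cube field_simps)
  finally show ?thesis .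
qed

lemma abs_variance_sample_Dp_hat_le:
  fixes fX fY :: "'a::euclidean_space \<Rightarrow> real" and U :: "'a set" and r :: real
  assumes fX: "prob_density fX" and fY: "prob_density fY" and U: "sphere_half_net U" and k: "1 \<le> k"
    and r: "0 < r" and N: "2 / r \<le> real N" and M: "M = nat \<lfloor>real N * r\<rfloor>"
  shows "\<bar>variance_under (sample_measure N M fX fY) (\<lambda>(xs, ys). Dp_hat k N M xs ys)\<bar>
    \<le> (1 + 2 * real k * real (card U))\<^sup>2 * (1 + r) ^ 3 / r\<^sup>2 * (1 / real N)"
proof -
  have \<mu>X: "borel_diffuse_prob (density lborel (\<lambda>x. ennreal (fX x)))"
    and \<mu>Y: "borel_diffuse_prob (density lborel (\<lambda>x. ennreal (fY x)))"
    using fX fY by (simp_all add: borel_diffuse_prob_density)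
  show ?thesis
    using variance_Dp_hat_le[OF \<mu>X \<mu>Y U k, of N M] variance_Dp_hat_nonneg[OF \<mu>X \<mu>Y, of N M k]
      sample_size_bound[OF r N M, of "1 + 2 * real k * real (card U)"]
    by (simp add: sample_measure_def)
qed

theorem theorem2:
  fixes fX fY :: "'a::euclidean_space \<Rightarrow> real"
    and S :: "'a set" and p \<gamma> CL CU L :: real and k :: nat
  assumes "0 < p" "p < 1"
    and "1 \<le> k"
    and "prob_density fX" "prob_density fY"
    and "bounded S"
    and "0 < CL" "CL \<le> CU"
    and "\<And>x. x \<notin> S \<Longrightarrow> fX x = 0" "\<And>x. x \<notin> S \<Longrightarrow> fY x = 0"
    and "\<And>x. x \<in> S \<Longrightarrow> CL \<le> fX x \<and> fX x \<le> CU"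
    and "\<And>x. x \<in> S \<Longrightarrow> CL \<le> fY x \<and> fY x \<le> CU"
    and "0 < \<gamma>" "\<gamma> \<le> 1"
    and "\<And>x y. x \<in> S \<Longrightarrow> y \<in> S \<Longrightarrow> \<bar>fX x - fX y\<bar> \<le> L * dist x y powr \<gamma>"
    and "\<And>x y. x \<in> S \<Longrightarrow> y \<in> S \<Longrightarrow> \<bar>fY x - fY y\<bar> \<le> L * dist x y powr \<gamma>"
  shows "(\<lambda>N::nat. let M = nat \<lfloor>real N * (1 - p) / p\<rfloor> in
            variance_under (sample_measure N M fX fY) (\<lambda>(xs, ys). Dp_hat k N M xs ys))
         \<in> O(\<lambda>N. 1 / real N)"
proof -
  obtain U :: "'a set" where U: "sphere_half_net U" using sphere_half_net_exists by blast
  define r where "r = (1 - p) / p"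
  have r: "0 < r" using assms(1,2) by (simp add: r_def)
  have "\<forall>\<^sub>F N in at_top. norm (let M = nat \<lfloor>real N * (1 - p) / p\<rfloor> in
      variance_under (sample_measure N M fX fY) (\<lambda>(xs, ys). Dp_hat k N M xs ys))
    \<le> (1 + 2 * real k * real (card U))\<^sup>2 * (1 + r) ^ 3 / r\<^sup>2 * norm (1 / real N)"
    using eventually_ge_at_top[of "nat \<lceil>2 / r\<rceil>"]
  proof eventually_elim
    fix N assume "nat \<lceil>2 / r\<rceil> \<le> N"
    then have "2 / r \<le> real N" by linarith
    from abs_variance_sample_Dp_hat_le[OF assms(4,5) U assms(3) r this refl]
    show "norm (let M = nat \<lfloor>real N * (1 - p) / p\<rfloor> in
        variance_under (sample_measure N M fX fY) (\<lambda>(xs, ys). Dp_hat k N M xs ys))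
      \<le> (1 + 2 * real k * real (card U))\<^sup>2 * (1 + r) ^ 3 / r\<^sup>2 * norm (1 / real N)"
      by (simp add: r_def Let_def)
  qed
  then show ?thesis by (rule bigoI)
qed

end
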